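(* Consider two channels $I$ and $J$ with the same finite state set $\mathcal{H}$ and pmfs $p^I_{\mathcal{H}}$, $p^J_{\mathcal{H}}$, and let $h^I\sim p^I_{\mathcal{H}}$, $h^J\sim p^J_{\mathcal{H}}$. Assume $C_u$ is non-increasing in $h$. If $h^I$ first-order stochastically dominates $h^J$, i.e. $\mathbb{E}[f(h^I)]\ge\mathbb{E}[f(h^J)]$ for every non-decreasing $f:\mathcal{H}\to\mathbb{R}$, then $\bar A_r^{I*}\le\bar A_r^{J*}$, where $\bar A_r^{I*}$ and $\bar A_r^{J*}$ denote the optimal values of the constrained problem (with the same $C_s$, $C_u$, $\hat A_l$, $\hat A_r$ and $C^{\max}$) under channels $I$ and $J$ respectively.
   Context: Single IoT device model. Fix integers $\hat A_l,\hat A_r\ge1$; AoI states $\mathbf{A}=(A_l,A_r)\in\{1,\dots,\hat A_l\}\times\{1,\dots,\hat A_r\}$. Channel states lie in a finite set $\mathcal{H}\subset(0,\infty)$ and are i.i.d. across time slots with a given pmf. Actions $\mathbf{w}=(s,u)\in\{0,1\}^2$ with energy cost $C(\mathbf{w},h)=sC_s+uC_u(h)$, $C_s\ge0$, $C_u:\mathcal{H}\to[0,\infty)$. AoI dynamics under $\mathbf{w}=(s,u)$: $A_l(t+1)=1$ if $s=1$, else $\min\{A_l(t)+1,\hat A_l\}$; $A_r(t+1)=\min\{A_l(t)+1,\hat A_r\}$ if $u=1$, else $\min\{A_r(t)+1,\hat A_r\}$. A stationary policy $\pi$ selects (possibly randomly) an action as a function of the current $(\mathbf{A}(t),h(t))$;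 for stationary unichain $\pi$, $\bar A_r(\pi)=\limsup_{T\to\infty}\frac1T\sum_{t=1}^T\mathbb{E}[A_r(t)]$ and $\bar C(\pi)=\limsup_{T\to\infty}\frac1T\sum_{t=1}^T\mathbb{E}[C(\mathbf{w}(t),h(t))]$. Given $C^{\max}>0$ (assumed such that the problem is feasible), the constrained problem is $\bar A_r^*=\min_\pi\{\bar A_r(\pi):\bar C(\pi)\le C^{\max}\}$ over stationary unichain policies. *)

theory Defs
  imports Complex_Main "HOL-Library.Extended_Real"
begin

text \<open>System state: ((A_l, A_r), h).  Actions: (s, u) encoded as a pair of booleans.\<close>

type_synonym aoi_state = "(nat \<times> nat) \<times> real"
type_synonym action = "bool \<times> bool"

definition state_space :: "nat \<Rightarrow> nat \<Rightarrow> real set \<Rightarrow> aoi_state set" where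
  "state_space Al Ar H = ({1..Al} \<times> {1..Ar}) \<times> H"

definition aoi_next :: "nat \<Rightarrow> nat \<Rightarrow> nat \<times> nat \<Rightarrow> action \<Rightarrow> nat \<times> nat" where
  "aoi_next Al Ar A w =
     ((if fst w then 1 else min (fst A + 1) Al),
      (if snd w then min (fst A + 1) Ar else min (snd A + 1) Ar))"

definition energy_cost :: "real \<Rightarrow> (real \<Rightarrow> real) \<Rightarrow> action \<Rightarrow> real \<Rightarrow> real" where
  "energy_cost Cs Cu w h = (if fst w then Cs else 0) + (if snd w then Cu h else 0)"

definition valid_policy :: "nat \<Rightarrow> nat \<Rightarrow> real set \<Rightarrow> (aoi_state \<Rightarrow> action \<Rightarrow> real) \<Rightarrow> bool" where
  "valid_policy Al Ar H \<pi> \<longleftrightarrow>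
     (\<forall>x\<in>state_space Al Ar H. (\<forall>w. \<pi> x w \<ge> 0) \<and> (\<Sum>w\<in>UNIV. \<pi> x w) = 1)"

definition trans_prob :: "nat \<Rightarrow> nat \<Rightarrow> (real \<Rightarrow> real) \<Rightarrow> (aoi_state \<Rightarrow> action \<Rightarrow> real)
    \<Rightarrow> aoi_state \<Rightarrow> aoi_state \<Rightarrow> real" where
  "trans_prob Al Ar p \<pi> x y =
     (\<Sum>w\<in>UNIV. \<pi> x w * (if aoi_next Al Ar (fst x) w = fst y then p (snd y) else 0))"

text \<open>State distribution at time t+1 (time index 0 here = slot 1), started from A(1) = (1,1).\<close>
fun state_dist :: "nat \<Rightarrow> nat \<Rightarrow> real set \<Rightarrow> (real \<Rightarrow> real) \<Rightarrow> (aoi_state \<Rightarrow> action \<Rightarrow> real)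
    \<Rightarrow> nat \<Rightarrow> aoi_state \<Rightarrow> real" where
  "state_dist Al Ar H p \<pi> 0 y = (if fst y = (1, 1) then p (snd y) else 0)"
| "state_dist Al Ar H p \<pi> (Suc t) y =
     (\<Sum>x\<in>state_space Al Ar H. state_dist Al Ar H p \<pi> t x * trans_prob Al Ar p \<pi> x y)"

definition avg_AoI :: "nat \<Rightarrow> nat \<Rightarrow> real set \<Rightarrow> (real \<Rightarrow> real) \<Rightarrow> (aoi_state \<Rightarrow> action \<Rightarrow> real) \<Rightarrow> ereal" where
  "avg_AoI Al Ar H p \<pi> =
     limsup (\<lambda>T. ereal ((1 / real T) *
       (\<Sum>t<T. \<Sum>x\<in>state_space Al Ar H. state_dist Al Ar H p \<pi> t x * real (snd (fst x)))))"

definition avg_cost :: "nat \<Rightarrow> nat \<Rightarrow> real set \<Rightarrow> (real \<Rightarrow> real) \<Rightarrow> real \<Rightarrow> (real \<Rightarrow> real)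
    \<Rightarrow> (aoi_state \<Rightarrow> action \<Rightarrow> real) \<Rightarrow> ereal" where
  "avg_cost Al Ar H p Cs Cu \<pi> =
     limsup (\<lambda>T. ereal ((1 / real T) *
       (\<Sum>t<T. \<Sum>x\<in>state_space Al Ar H. state_dist Al Ar H p \<pi> t x *
           (\<Sum>w\<in>UNIV. \<pi> x w * energy_cost Cs Cu w (snd x)))))"

definition recurrent_class :: "nat \<Rightarrow> nat \<Rightarrow> real set \<Rightarrow> (real \<Rightarrow> real) \<Rightarrow> (aoi_state \<Rightarrow> action \<Rightarrow> real)
    \<Rightarrow> aoi_state set \<Rightarrow> bool" where
  "recurrent_class Al Ar H p \<pi> C \<longleftrightarrow>
     C \<subseteq> state_space Al Ar H \<and> C \<noteq> {} \<and>
     (\<forall>x\<in>C. \<forall>y\<in>state_space Al Ar H. trans_prob Al Ar p \<pi> x y > 0 \<longrightarrow> y \<in> C) \<and>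
     (\<forall>x\<in>C. \<forall>y\<in>C. (\<lambda>a b. a \<in> state_space Al Ar H \<and> b \<in> state_space Al Ar H
                             \<and> trans_prob Al Ar p \<pi> a b > 0)\<^sup>*\<^sup>* x y)"

definition unichain :: "nat \<Rightarrow> nat \<Rightarrow> real set \<Rightarrow> (real \<Rightarrow> real) \<Rightarrow> (aoi_state \<Rightarrow> action \<Rightarrow> real) \<Rightarrow> bool" where
  "unichain Al Ar H p \<pi> \<longleftrightarrow> (\<exists>!C. recurrent_class Al Ar H p \<pi> C)"

definition feasible_policies :: "nat \<Rightarrow> nat \<Rightarrow> real set \<Rightarrow> (real \<Rightarrow> real) \<Rightarrow> real \<Rightarrow> (real \<Rightarrow> real)
    \<Rightarrow> real \<Rightarrow> (aoi_state \<Rightarrow> action \<Rightarrow> real) set" where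
  "feasible_policies Al Ar H p Cs Cu Cmax =
     {\<pi>. valid_policy Al Ar H \<pi> \<and> unichain Al Ar H p \<pi> \<and> avg_cost Al Ar H p Cs Cu \<pi> \<le> ereal Cmax}"

definition opt_AoI :: "nat \<Rightarrow> nat \<Rightarrow> real set \<Rightarrow> (real \<Rightarrow> real) \<Rightarrow> real \<Rightarrow> (real \<Rightarrow> real)
    \<Rightarrow> real \<Rightarrow> ereal" where
  "opt_AoI Al Ar H p Cs Cu Cmax =
     (INF \<pi>\<in>feasible_policies Al Ar H p Cs Cu Cmax. avg_AoI Al Ar H p \<pi>)"

definition is_pmf_on :: "real set \<Rightarrow> (real \<Rightarrow> real) \<Rightarrow> bool" where
  "is_pmf_on H p \<longleftrightarrow> (\<forall>h\<in>H. p h \<ge> 0) \<and> (\<Sum>h\<in>H. p h) = 1"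

end

theory Submission
  imports Defs
begin

text \<open>
  Since \<open>h\<^sup>I\<close> stochastically dominates \<open>h\<^sup>J\<close>, the quantile coupling \<open>\<gamma>\<close> of the two channel
  pmfs only charges pairs \<open>(h\<^sup>I, h\<^sup>J)\<close> with \<open>h\<^sup>J \<le> h\<^sup>I\<close>. A policy \<open>\<pi>\<close> for channel \<open>J\<close> is
  turned into a policy for channel \<open>I\<close>: on observing \<open>h\<^sup>I\<close>, act as \<open>\<pi>\<close> would on a state
  \<open>h\<^sup>J\<close> drawn from \<open>\<gamma>(h\<^sup>I, \<cdot>) / p\<^sup>I(h\<^sup>I)\<close>. The AoI dynamics ignore the channel and the
  channel is i.i.d., so the AoI process is a Markov chain driven only by the channel-averaged
  action probabilities, which agree for the two policies. Hence the average AoI is unchanged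
  and the new chain is again unichain, while the average energy cost does not increase
  because \<open>C\<^sub>u\<close> is non-increasing and \<open>h\<^sup>J \<le> h\<^sup>I\<close> on the support of \<open>\<gamma>\<close>.
\<close>

section \<open>Quantile coupling of two channel distributions\<close>

definition cdf :: "real set \<Rightarrow> (real \<Rightarrow> real) \<Rightarrow> real \<Rightarrow> real" where
  "cdf S p t = (\<Sum>x\<in>{x\<in>S. x \<le> t}. p x)"

definition cdf_strict :: "real set \<Rightarrow> (real \<Rightarrow> real) \<Rightarrow> real \<Rightarrow> real" where
  "cdf_strict S p t = (\<Sum>x\<in>{x\<in>S. x < t}. p x)"

definition clamp :: "real \<Rightarrow> real \<Rightarrow> real \<Rightarrow> real" where
  "clamp a b x = max a (min b x)"

text \<open>The length of the overlap of the quantile intervals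
  \<open>[F\<^sub>p(x-), F\<^sub>p(x)]\<close> and \<open>[F\<^sub>q(y-), F\<^sub>q(y)]\<close>.\<close>
definition quantile_coupling :: "real set \<Rightarrow> (real \<Rightarrow> real) \<Rightarrow> (real \<Rightarrow> real) \<Rightarrow> real \<Rightarrow> real \<Rightarrow> real"
  where "quantile_coupling H p q x y =
    clamp (cdf_strict H p x) (cdf H p x) (cdf H q y) - clamp (cdf_strict H p x) (cdf H p x) (cdf_strict H q y)"

lemma sum_cdf_telescope:
  fixes g :: "real \<Rightarrow> real"
  assumes "finite S"
  shows "(\<Sum>h\<in>S. g (cdf S p h) - g (cdf_strict S p h)) = g (sum p S) - g 0"
  using assms
proof (induction S rule: finite_linorder_max_induct)
  case empty
  then show ?case by simp
next
  case (insert b S)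
  have "b \<notin> S" using insert by auto
  have below: "{x\<in>insert b S. x \<le> h} = {x\<in>S. x \<le> h}" "{x\<in>insert b S. x < h} = {x\<in>S. x < h}"
    if "h \<in> S" for h using insert that by force+
  have top: "{x\<in>insert b S. x \<le> b} = insert b S" "{x\<in>insert b S. x < b} = S"
    using insert by force+
  have rest: "(\<Sum>h\<in>S. g (cdf (insert b S) p h) - g (cdf_strict (insert b S) p h))
      = (\<Sum>h\<in>S. g (cdf S p h) - g (cdf_strict S p h))"
    by (rule sum.cong[OF refl]) (simp only: cdf_def cdf_strict_def below)
  have "cdf (insert b S) p b = sum p (insert b S)" "cdf_strict (insert b S) p b = sum p S"
    by (simp_all only: cdf_def cdf_strict_def top)
  then show ?case
    unfolding sum.insert[OF \<open>finite S\<close> \<open>b \<notin> S\<close>] rest insert.IH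
    using \<open>b \<notin> S\<close> \<open>finite S\<close> by simp
qed

lemma clamp_diff_swap:
  assumes "a' \<le> a" "b' \<le> b"
  shows "clamp a' a b - clamp a' a b' = clamp b' b a - clamp b' b a'"
  using assms unfolding clamp_def by (smt (verit))

lemma clamp_mono: "a \<le> b \<Longrightarrow> x \<le> y \<Longrightarrow> clamp a b x \<le> clamp a b y"
  unfolding clamp_def by (auto simp: max_def min_def)

lemma cdf_strict_le_cdf: "finite S \<Longrightarrow> \<forall>h\<in>S. p h \<ge> 0 \<Longrightarrow> cdf_strict S p t \<le> cdf S p t"
  unfolding cdf_strict_def cdf_def by (rule sum_mono2) auto

lemma cdf_minus_cdf_strict: "finite S \<Longrightarrow> t \<in> S \<Longrightarrow> cdf S p t - cdf_strict S p t = p t"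
proof -
  assume "finite S" "t \<in> S"
  then have "{x\<in>S. x \<le> t} = insert t {x\<in>S. x < t}" by force
  then show ?thesis using \<open>finite S\<close> by (simp add: cdf_def cdf_strict_def)
qed

lemma cdf_strict_nonneg: "\<forall>h\<in>S. p h \<ge> 0 \<Longrightarrow> cdf_strict S p t \<ge> 0"
  unfolding cdf_strict_def by (rule sum_nonneg) auto

lemma cdf_le_sum: "finite S \<Longrightarrow> \<forall>h\<in>S. p h \<ge> 0 \<Longrightarrow> cdf S p t \<le> sum p S"
  unfolding cdf_def by (rule sum_mono2) auto

lemma fosd_imp_cdf_le:
  assumes "finite H" and p: "is_pmf_on H p" and q: "is_pmf_on H q"
    and fosd: "\<forall>f :: real \<Rightarrow> real. mono_on H f \<longrightarrow> (\<Sum>h\<in>H. f h * p h) \<ge> (\<Sum>h\<in>H. f h * q h)"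
  shows "cdf H p t \<le> cdf H q t"
proof -
  define f where "f = (\<lambda>h::real. if t < h then 1 else (0::real))"
  have "mono_on H f" unfolding f_def by (auto intro!: mono_onI)
  then have tail: "(\<Sum>h\<in>H. f h * p h) \<ge> (\<Sum>h\<in>H. f h * q h)" using fosd by blast
  have split: "sum r H = cdf H r t + (\<Sum>h\<in>H. f h * r h)" for r :: "real \<Rightarrow> real"
  proof -
    have "sum r H = (\<Sum>h\<in>H. (if h \<le> t then r h else 0) + f h * r h)"
      by (rule sum.cong) (auto simp: f_def)
    also have "\<dots> = cdf H r t + (\<Sum>h\<in>H. f h * r h)"
      using \<open>finite H\<close> by (simp add: sum.distrib cdf_def sum.inter_filter)
    finally show ?thesis .
  qed
  have "sum p H = 1" "sum q H = 1" using p q by (auto simp: is_pmf_on_def)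
  then show ?thesis using tail split[of p] split[of q] by linarith
qed

lemma sum_pos_imp_ex_pos:
  fixes f :: "'a \<Rightarrow> real"
  assumes "finite S" "\<And>x. x \<in> S \<Longrightarrow> f x \<ge> 0" "sum f S > 0"
  shows "\<exists>x\<in>S. f x > 0"
proof (rule ccontr)
  assume "\<not> ?thesis"
  then have "\<forall>x\<in>S. f x = 0" using assms(2) by force
  then show False using assms(3) by simp
qed

locale pmf_pair =
  fixes H :: "real set" and p q :: "real \<Rightarrow> real"
  assumes finite_H: "finite H" and pmf_p: "is_pmf_on H p" and pmf_q: "is_pmf_on H q"
begin

lemma p_nonneg: "h \<in> H \<Longrightarrow> p h \<ge> 0" and q_nonneg: "h \<in> H \<Longrightarrow> q h \<ge> 0"
  and sum_p: "sum p H = 1" and sum_q: "sum q H = 1"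
  using pmf_p pmf_q by (auto simp: is_pmf_on_def)

lemma quantile_coupling_nonneg: "quantile_coupling H p q x y \<ge> 0"
  unfolding quantile_coupling_def
  using cdf_strict_le_cdf[OF finite_H, of p] cdf_strict_le_cdf[OF finite_H, of q] p_nonneg q_nonneg
  by (simp add: clamp_mono)

lemma quantile_coupling_sum_snd: "x \<in> H \<Longrightarrow> (\<Sum>y\<in>H. quantile_coupling H p q x y) = p x"
proof -
  assume x: "x \<in> H"
  have "(\<Sum>y\<in>H. quantile_coupling H p q x y)
     = clamp (cdf_strict H p x) (cdf H p x) (sum q H) - clamp (cdf_strict H p x) (cdf H p x) 0"
    unfolding quantile_coupling_def by (rule sum_cdf_telescope[OF finite_H])
  also have "\<dots> = cdf H p x - cdf_strict H p x"
    using sum_p sum_q cdf_strict_nonneg[of H p x] cdf_strict_le_cdf[OF finite_H, of p x]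
      cdf_le_sum[OF finite_H, of p x] p_nonneg
    by (auto simp: clamp_def)
  also have "\<dots> = p x" using cdf_minus_cdf_strict[OF finite_H x] .
  finally show ?thesis .
qed

text \<open>The overlap length is symmetric in the two intervals, so the column sums telescope
  like the row sums.\<close>
lemma quantile_coupling_sum_fst: "y \<in> H \<Longrightarrow> (\<Sum>x\<in>H. quantile_coupling H p q x y) = q y"
proof -
  assume y: "y \<in> H"
  have "(\<Sum>x\<in>H. quantile_coupling H p q x y)
     = (\<Sum>x\<in>H. clamp (cdf_strict H q y) (cdf H q y) (cdf H p x)
              - clamp (cdf_strict H q y) (cdf H q y) (cdf_strict H p x))"
    unfolding quantile_coupling_def
    by (rule sum.cong[OF refl], rule clamp_diff_swap)
       (use cdf_strict_le_cdf[OF finite_H] p_nonneg q_nonneg in auto)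
  also have "\<dots> = clamp (cdf_strict H q y) (cdf H q y) (sum p H) - clamp (cdf_strict H q y) (cdf H q y) 0"
    by (rule sum_cdf_telescope[OF finite_H])
  also have "\<dots> = cdf H q y - cdf_strict H q y"
    using sum_p sum_q cdf_strict_nonneg[of H q y] cdf_strict_le_cdf[OF finite_H, of q y]
      cdf_le_sum[OF finite_H, of q y] q_nonneg
    by (auto simp: clamp_def)
  also have "\<dots> = q y" using cdf_minus_cdf_strict[OF finite_H y] .
  finally show ?thesis .
qed

lemma quantile_coupling_le_fst: "x \<in> H \<Longrightarrow> y \<in> H \<Longrightarrow> quantile_coupling H p q x y \<le> p x"
  using quantile_coupling_sum_snd[of x] member_le_sum[of y H "quantile_coupling H p q x"]
    quantile_coupling_nonneg finite_H by auto

lemma quantile_coupling_le_snd: "x \<in> H \<Longrightarrow> y \<in> H \<Longrightarrow> quantile_coupling H p q x y \<le> q y"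
  using quantile_coupling_sum_fst[of y] member_le_sum[of x H "\<lambda>x. quantile_coupling H p q x y"]
    quantile_coupling_nonneg finite_H by auto

lemma quantile_coupling_pos_imp_le:
  assumes dom: "\<And>t. cdf H p t \<le> cdf H q t" and pos: "quantile_coupling H p q x y > 0"
  shows "y \<le> x"
proof (rule ccontr)
  assume "\<not> y \<le> x"
  then have "cdf H q x \<le> cdf_strict H q y"
    unfolding cdf_def cdf_strict_def using finite_H q_nonneg by (intro sum_mono2) auto
  moreover have "cdf_strict H q y \<le> cdf H q y" "cdf_strict H p x \<le> cdf H p x"
    using cdf_strict_le_cdf[OF finite_H] p_nonneg q_nonneg by blast+
  ultimately have "quantile_coupling H p q x y = 0"
    using dom[of x] unfolding quantile_coupling_def clamp_def by (auto simp: max_def min_def)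
  with pos show False by simp
qed

end

section \<open>The AoI marginal process\<close>

definition aoi_states :: "nat \<Rightarrow> nat \<Rightarrow> (nat \<times> nat) set" where
  "aoi_states Al Ar = {1..Al} \<times> {1..Ar}"

text \<open>Because the channel is i.i.d. and the AoI update ignores it, the AoI process is itself a
  Markov chain, which takes action \<open>w\<close> in AoI state \<open>A\<close> with the channel-averaged probability
  below.\<close>
definition aoi_action_prob :: "real set \<Rightarrow> (real \<Rightarrow> real) \<Rightarrow> (aoi_state \<Rightarrow> action \<Rightarrow> real)
    \<Rightarrow> nat \<times> nat \<Rightarrow> action \<Rightarrow> real" where
  "aoi_action_prob H p \<pi> A w = (\<Sum>h\<in>H. p h * \<pi> (A, h) w)"

fun aoi_dist :: "nat \<Rightarrow> nat \<Rightarrow> (nat \<times> nat \<Rightarrow> action \<Rightarrow> real) \<Rightarrow> nat \<Rightarrow> nat \<times> nat \<Rightarrow> real" where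
  "aoi_dist Al Ar Q 0 B = of_bool (B = (1, 1))"
| "aoi_dist Al Ar Q (Suc t) B =
     (\<Sum>A\<in>aoi_states Al Ar. aoi_dist Al Ar Q t A * (\<Sum>w\<in>UNIV. Q A w * of_bool (aoi_next Al Ar A w = B)))"

definition aoi_expected_cost :: "real set \<Rightarrow> (real \<Rightarrow> real) \<Rightarrow> real \<Rightarrow> (real \<Rightarrow> real)
    \<Rightarrow> (aoi_state \<Rightarrow> action \<Rightarrow> real) \<Rightarrow> nat \<times> nat \<Rightarrow> real" where
  "aoi_expected_cost H p Cs Cu \<pi> A = (\<Sum>h\<in>H. p h * (\<Sum>w\<in>UNIV. \<pi> (A, h) w * energy_cost Cs Cu w h))"

lemma state_space_eq: "state_space Al Ar H = aoi_states Al Ar \<times> H"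
  by (simp add: state_space_def aoi_states_def)

lemma mem_state_space_iff: "x \<in> state_space Al Ar H \<longleftrightarrow> fst x \<in> aoi_states Al Ar \<and> snd x \<in> H"
  by (cases x) (auto simp: state_space_eq)

lemma sum_state_space:
  "finite H \<Longrightarrow> (\<Sum>x\<in>state_space Al Ar H. f x) = (\<Sum>A\<in>aoi_states Al Ar. \<Sum>h\<in>H. f (A, h))"
  by (simp add: state_space_eq aoi_states_def sum.cartesian_product)

lemma aoi_next_in_aoi_states:
  "Al \<ge> 1 \<Longrightarrow> Ar \<ge> 1 \<Longrightarrow> A \<in> aoi_states Al Ar \<Longrightarrow> aoi_next Al Ar A w \<in> aoi_states Al Ar"
  by (auto simp: aoi_states_def aoi_next_def)

lemma state_dist_eq_aoi_dist:
  assumes "finite H"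
  shows "state_dist Al Ar H p \<pi> t y = p (snd y) * aoi_dist Al Ar (aoi_action_prob H p \<pi>) t (fst y)"
proof (induction t arbitrary: y)
  case 0
  then show ?case by simp
next
  case (Suc t)
  let ?m = "aoi_dist Al Ar (aoi_action_prob H p \<pi>) t"
  have if_as_of_bool: "(if c then a else 0) = a * of_bool c" for c and a :: real
    by simp
  have "state_dist Al Ar H p \<pi> (Suc t) y
      = (\<Sum>A\<in>aoi_states Al Ar. \<Sum>h\<in>H. \<Sum>w\<in>UNIV.
           p (snd y) * (?m A * (p h * \<pi> (A, h) w * of_bool (aoi_next Al Ar A w = fst y))))"
    using assms
    by (simp add: sum_state_space Suc trans_prob_def sum_distrib_left if_as_of_bool mult_ac)
  also have "\<dots> = (\<Sum>A\<in>aoi_states Al Ar. \<Sum>w\<in>UNIV. \<Sum>h\<in>H.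
           p (snd y) * (?m A * (p h * \<pi> (A, h) w * of_bool (aoi_next Al Ar A w = fst y))))"
    by (rule sum.cong[OF refl], rule sum.swap)
  also have "\<dots> = p (snd y) * aoi_dist Al Ar (aoi_action_prob H p \<pi>) (Suc t) (fst y)"
    by (simp add: aoi_action_prob_def sum_distrib_left sum_distrib_right mult_ac)
  finally show ?case .
qed

lemma aoi_dist_cong:
  assumes "\<And>A w. A \<in> aoi_states Al Ar \<Longrightarrow> Q1 A w = Q2 A w"
  shows "aoi_dist Al Ar Q1 t = aoi_dist Al Ar Q2 t"
proof (induction t)
  case (Suc t)
  show ?case
    unfolding aoi_dist.simps(2)[abs_def] Suc.IH by (intro ext sum.cong refl) (simp add: assms)
qed (simp add: fun_eq_iff)

lemma aoi_dist_nonneg: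
  assumes "\<And>A w. A \<in> aoi_states Al Ar \<Longrightarrow> Q A w \<ge> 0"
  shows "aoi_dist Al Ar Q t B \<ge> 0"
  using assms by (induction t arbitrary: B) (auto intro!: sum_nonneg mult_nonneg_nonneg)

lemma avg_AoI_eq_aoi_dist:
  assumes "finite H" "sum p H = 1"
  shows "avg_AoI Al Ar H p \<pi> = limsup (\<lambda>T. ereal (1 / real T *
    (\<Sum>t<T. \<Sum>A\<in>aoi_states Al Ar. aoi_dist Al Ar (aoi_action_prob H p \<pi>) t A * real (snd A))))"
proof -
  have "(\<Sum>x\<in>state_space Al Ar H. state_dist Al Ar H p \<pi> t x * real (snd (fst x)))
      = (\<Sum>A\<in>aoi_states Al Ar. aoi_dist Al Ar (aoi_action_prob H p \<pi>) t A * real (snd A))" for t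
    using assms
    by (simp add: sum_state_space state_dist_eq_aoi_dist mult.assoc sum_distrib_right[symmetric])
  then show ?thesis unfolding avg_AoI_def by simp
qed

lemma avg_cost_eq_aoi_dist:
  assumes "finite H"
  shows "avg_cost Al Ar H p Cs Cu \<pi> = limsup (\<lambda>T. ereal (1 / real T *
    (\<Sum>t<T. \<Sum>A\<in>aoi_states Al Ar.
       aoi_dist Al Ar (aoi_action_prob H p \<pi>) t A * aoi_expected_cost H p Cs Cu \<pi> A)))"
  using assms unfolding avg_cost_def
  by (simp add: sum_state_space state_dist_eq_aoi_dist aoi_expected_cost_def sum_distrib_left mult_ac)

section \<open>Recurrent classes of the induced chain\<close>

definition support_rel :: "nat \<Rightarrow> nat \<Rightarrow> real set \<Rightarrow> (real \<Rightarrow> real) \<Rightarrow> (aoi_state \<Rightarrow> action \<Rightarrow> real)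
    \<Rightarrow> aoi_state \<Rightarrow> aoi_state \<Rightarrow> bool" where
  "support_rel Al Ar H p \<pi> x y \<longleftrightarrow>
     x \<in> state_space Al Ar H \<and> y \<in> state_space Al Ar H \<and> trans_prob Al Ar p \<pi> x y > 0"

text \<open>The recurrent classes of the induced chain turn out to be exactly the sets
  \<open>S \<times> {h. p h > 0}\<close> with \<open>S\<close> a closed communicating class of the following relation on AoI
  states, so being unichain depends on the channel and the policy only through it.\<close>
definition aoi_step :: "nat \<Rightarrow> nat \<Rightarrow> real set \<Rightarrow> (real \<Rightarrow> real) \<Rightarrow> (aoi_state \<Rightarrow> action \<Rightarrow> real)
    \<Rightarrow> nat \<times> nat \<Rightarrow> nat \<times> nat \<Rightarrow> bool" where
  "aoi_step Al Ar H p \<pi> A B \<longleftrightarrow>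
     A \<in> aoi_states Al Ar \<and> (\<exists>h\<in>H. p h > 0 \<and> (\<exists>w. \<pi> (A, h) w > 0 \<and> aoi_next Al Ar A w = B))"

definition closed_communicating :: "nat \<Rightarrow> nat \<Rightarrow> (nat \<times> nat \<Rightarrow> nat \<times> nat \<Rightarrow> bool) \<Rightarrow> (nat \<times> nat) set \<Rightarrow> bool"
  where "closed_communicating Al Ar U S \<longleftrightarrow>
    S \<noteq> {} \<and> S \<subseteq> aoi_states Al Ar \<and> (\<forall>A\<in>S. \<forall>B. U A B \<longrightarrow> B \<in> S) \<and> (\<forall>A\<in>S. \<forall>B\<in>S. U\<^sup>+\<^sup>+ A B)"

lemma recurrent_class_iff: "recurrent_class Al Ar H p \<pi> C \<longleftrightarrow>
     C \<subseteq> state_space Al Ar H \<and> C \<noteq> {} \<and>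
     (\<forall>x\<in>C. \<forall>y\<in>state_space Al Ar H. trans_prob Al Ar p \<pi> x y > 0 \<longrightarrow> y \<in> C) \<and>
     (\<forall>x\<in>C. \<forall>y\<in>C. (support_rel Al Ar H p \<pi>)\<^sup>*\<^sup>* x y)"
  by (simp add: recurrent_class_def support_rel_def[abs_def])

locale induced_chain =
  fixes Al Ar :: nat and H :: "real set" and p :: "real \<Rightarrow> real" and \<pi> :: "aoi_state \<Rightarrow> action \<Rightarrow> real"
  assumes Al: "Al \<ge> 1" and Ar: "Ar \<ge> 1" and finite_H: "finite H" and pmf: "is_pmf_on H p"
    and valid: "valid_policy Al Ar H \<pi>"
begin

abbreviation "SS \<equiv> state_space Al Ar H"
abbreviation "R \<equiv> support_rel Al Ar H p \<pi>"
abbreviation "U \<equiv> aoi_step Al Ar H p \<pi>"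
abbreviation "Hp \<equiv> {h\<in>H. p h > 0}"

lemma p_nonneg: "h \<in> H \<Longrightarrow> p h \<ge> 0"
  using pmf by (auto simp: is_pmf_on_def)

lemma ex_channel_pos: "\<exists>h\<in>H. p h > 0"
  using pmf sum_pos_imp_ex_pos[OF finite_H, of p] by (simp add: is_pmf_on_def)

lemma policy_nonneg: "x \<in> SS \<Longrightarrow> \<pi> x w \<ge> 0"
  using valid unfolding valid_policy_def by blast

lemma ex_action_pos: "x \<in> SS \<Longrightarrow> \<exists>w. \<pi> x w > 0"
  using valid sum_pos_imp_ex_pos[of UNIV "\<pi> x"] policy_nonneg unfolding valid_policy_def by simp

lemma trans_prob_pos_intro:
  assumes "x \<in> SS" "snd y \<in> H" "p (snd y) > 0" "\<pi> x w > 0" "aoi_next Al Ar (fst x) w = fst y"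
  shows "trans_prob Al Ar p \<pi> x y > 0"
  unfolding trans_prob_def
proof (rule sum_pos2[OF finite_UNIV UNIV_I])
  show "\<pi> x w * (if aoi_next Al Ar (fst x) w = fst y then p (snd y) else 0) > 0"
    using assms by simp
  show "\<pi> x v * (if aoi_next Al Ar (fst x) v = fst y then p (snd y) else 0) \<ge> 0" for v
    using policy_nonneg[OF assms(1)] p_nonneg[OF assms(2)] by simp
qed

lemma trans_prob_posE:
  assumes "x \<in> SS" "snd y \<in> H" "trans_prob Al Ar p \<pi> x y > 0"
  obtains w where "p (snd y) > 0" "\<pi> x w > 0" "aoi_next Al Ar (fst x) w = fst y"
proof -
  let ?f = "\<lambda>w. \<pi> x w * (if aoi_next Al Ar (fst x) w = fst y then p (snd y) else 0)"
  have "?f w \<ge> 0" for w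
    using policy_nonneg[OF assms(1)] p_nonneg[OF assms(2)] by simp
  then obtain w where "?f w > 0"
    using sum_pos_imp_ex_pos[of UNIV ?f] assms(3) unfolding trans_prob_def by auto
  moreover have "\<pi> x w \<ge> 0" "p (snd y) \<ge> 0"
    using policy_nonneg[OF assms(1)] p_nonneg[OF assms(2)] by auto
  ultimately have "p (snd y) > 0" "\<pi> x w > 0" "aoi_next Al Ar (fst x) w = fst y"
    by (auto simp: zero_less_mult_iff split: if_splits)
  then show ?thesis by (rule that)
qed

lemma support_rel_aoi_next:
  assumes "A \<in> aoi_states Al Ar" "h \<in> H" "\<pi> (A, h) w > 0" "h' \<in> H" "p h' > 0"
  shows "R (A, h) (aoi_next Al Ar A w, h')"
proof -
  have "(A, h) \<in> SS" "(aoi_next Al Ar A w, h') \<in> SS"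
    using assms aoi_next_in_aoi_states[OF Al Ar] by (auto simp: state_space_eq)
  moreover have "trans_prob Al Ar p \<pi> (A, h) (aoi_next Al Ar A w, h') > 0"
    by (rule trans_prob_pos_intro) (use assms calculation in auto)
  ultimately show ?thesis unfolding support_rel_def by simp
qed

lemma support_rel_imp_aoi_step:
  assumes "R x y" "p (snd x) > 0"
  shows "U (fst x) (fst y)"
proof -
  have "x \<in> SS" "snd y \<in> H" "trans_prob Al Ar p \<pi> x y > 0"
    using assms(1) by (auto simp: support_rel_def mem_state_space_iff)
  then obtain w where "\<pi> (fst x, snd x) w > 0" "aoi_next Al Ar (fst x) w = fst y"
    by (rule trans_prob_posE) simp
  then show ?thesis
    using \<open>x \<in> SS\<close> assms(2) unfolding aoi_step_def mem_state_space_iff by blast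
qed

lemma aoi_step_trancl_lift:
  assumes "U\<^sup>+\<^sup>+ A B"
  shows "\<exists>h0\<in>H. p h0 > 0 \<and> (\<forall>h'\<in>H. p h' > 0 \<longrightarrow> R\<^sup>+\<^sup>+ (A, h0) (B, h'))"
  using assms
proof (induction rule: converse_tranclp_induct)
  case (base y)
  then obtain h w where "y \<in> aoi_states Al Ar" "h \<in> H" "p h > 0" "\<pi> (y, h) w > 0" "aoi_next Al Ar y w = B"
    by (auto simp: aoi_step_def)
  then show ?case using support_rel_aoi_next by (metis tranclp.r_into_trancl)
next
  case (step y z)
  then obtain h1 where h1: "h1 \<in> H" "p h1 > 0" "\<forall>h'\<in>H. p h' > 0 \<longrightarrow> R\<^sup>+\<^sup>+ (z, h1) (B, h')"
    by blast
  from step obtain h w where "y \<in> aoi_states Al Ar" "h \<in> H" "p h > 0" "\<pi> (y, h) w > 0" "aoi_next Al Ar y w = z"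
    by (auto simp: aoi_step_def)
  then have "R (y, h) (z, h1)" using support_rel_aoi_next h1 by metis
  then show ?case using h1 \<open>h \<in> H\<close> \<open>p h > 0\<close> by (meson tranclp_into_tranclp2)
qed

lemma recurrent_class_if_closed_communicating:
  assumes "closed_communicating Al Ar U S"
  shows "recurrent_class Al Ar H p \<pi> (S \<times> Hp)"
proof -
  have S: "S \<noteq> {}" "S \<subseteq> aoi_states Al Ar" and closed: "\<And>A B. A \<in> S \<Longrightarrow> U A B \<Longrightarrow> B \<in> S"
    and communicating: "\<And>A B. A \<in> S \<Longrightarrow> B \<in> S \<Longrightarrow> U\<^sup>+\<^sup>+ A B"
    using assms unfolding closed_communicating_def by blast+
  have sub: "S \<times> Hp \<subseteq> SS" using S(2) by (auto simp: state_space_eq)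
  have step_closed: "y \<in> S \<times> Hp"
    if x: "x \<in> S \<times> Hp" and y: "y \<in> SS" and pos: "trans_prob Al Ar p \<pi> x y > 0" for x y
  proof -
    have "x \<in> SS" using x sub by blast
    have "snd y \<in> H" using y by (simp add: mem_state_space_iff)
    then obtain w where "p (snd y) > 0" by (rule trans_prob_posE[OF \<open>x \<in> SS\<close> _ pos])
    moreover have "U (fst x) (fst y)"
      using support_rel_imp_aoi_step \<open>x \<in> SS\<close> y pos x by (simp add: support_rel_def mem_Times_iff)
    moreover have "fst x \<in> S" using x by (simp add: mem_Times_iff)
    ultimately show ?thesis using closed y by (simp add: mem_state_space_iff mem_Times_iff)
  qed
  have connected: "R\<^sup>+\<^sup>+ (A, h) y" if A: "A \<in> S" "h \<in> Hp" and y: "y \<in> S \<times> Hp" for A h y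
  proof -
    have "(A, h) \<in> SS" using A sub by blast
    then obtain w where w: "\<pi> (A, h) w > 0" using ex_action_pos by blast
    have "U A (aoi_next Al Ar A w)" using A S(2) w unfolding aoi_step_def by blast
    then have "U\<^sup>+\<^sup>+ (aoi_next Al Ar A w) (fst y)"
      using closed communicating A(1) y by (simp add: mem_Times_iff)
    then obtain h1 where h1: "h1 \<in> H" "p h1 > 0"
      and paths: "\<forall>h'\<in>H. p h' > 0 \<longrightarrow> R\<^sup>+\<^sup>+ (aoi_next Al Ar A w, h1) (fst y, h')"
      using aoi_step_trancl_lift by blast
    have "R (A, h) (aoi_next Al Ar A w, h1)"
      using support_rel_aoi_next[OF _ _ w h1] A S(2) by blast
    moreover have "R\<^sup>+\<^sup>+ (aoi_next Al Ar A w, h1) y" using paths y by (cases y) auto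
    ultimately show ?thesis by (rule tranclp_into_tranclp2)
  qed
  show ?thesis
    unfolding recurrent_class_iff
  proof (intro conjI ballI impI)
    show "S \<times> Hp \<noteq> {}" using S(1) ex_channel_pos by blast
    show "R\<^sup>*\<^sup>* x y" if "x \<in> S \<times> Hp" "y \<in> S \<times> Hp" for x y
      using connected that by (cases x) (auto intro: tranclp_into_rtranclp)
  qed (use sub step_closed in blast)+
qed

context
  fixes C assumes recurrent: "recurrent_class Al Ar H p \<pi> C"
begin

lemma recurrent_class_subset: "C \<subseteq> SS" and recurrent_class_nonempty: "C \<noteq> {}"
  and recurrent_class_closed: "x \<in> C \<Longrightarrow> R x y \<Longrightarrow> y \<in> C"
  and recurrent_class_connected: "x \<in> C \<Longrightarrow> y \<in> C \<Longrightarrow> R\<^sup>*\<^sup>* x y"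
  using recurrent unfolding recurrent_class_iff support_rel_def by blast+

lemma recurrent_class_closed_rtrancl: "R\<^sup>*\<^sup>* x y \<Longrightarrow> x \<in> C \<Longrightarrow> y \<in> C"
  by (induction rule: rtranclp_induct) (auto intro: recurrent_class_closed)

lemma recurrent_class_ex_succ:
  assumes "(A, h) \<in> C" "h0 \<in> H" "p h0 > 0"
  obtains w where "R (A, h) (aoi_next Al Ar A w, h0)"
proof -
  have "(A, h) \<in> SS" using assms recurrent_class_subset by auto
  then obtain w where "\<pi> (A, h) w > 0" using ex_action_pos by blast
  then have "R (A, h) (aoi_next Al Ar A w, h0)"
    by (intro support_rel_aoi_next) (use \<open>(A, h) \<in> SS\<close> assms(2,3) in \<open>auto simp: state_space_eq\<close>)
  then show ?thesis by (rule that)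
qed

lemma recurrent_class_ex_pred: "y \<in> C \<Longrightarrow> \<exists>x\<in>C. R x y"
proof -
  assume "y \<in> C"
  obtain A h where y: "y = (A, h)" by (cases y)
  with \<open>y \<in> C\<close> have y_in: "(A, h) \<in> C" by simp
  obtain h0 where h0: "h0 \<in> H" "p h0 > 0" using ex_channel_pos by blast
  obtain w where z: "R (A, h) (aoi_next Al Ar A w, h0)" (is "R _ ?z")
    by (rule recurrent_class_ex_succ[OF y_in h0])
  have z_in: "?z \<in> C" by (rule recurrent_class_closed[OF y_in z])
  from recurrent_class_connected[OF z_in y_in] have "\<exists>x\<in>C. R x (A, h)"
  proof (cases rule: rtranclp.cases)
    case rtrancl_refl
    then show ?thesis using y_in z by auto
  next
    case (rtrancl_into_rtrancl x)
    then show ?thesis using recurrent_class_closed_rtrancl z_in by blast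
  qed
  then show ?thesis using y by simp
qed

lemma recurrent_class_channel_pos: "y \<in> C \<Longrightarrow> p (snd y) > 0"
proof -
  assume "y \<in> C"
  then obtain x where "R x y" using recurrent_class_ex_pred by blast
  then have "x \<in> SS" "snd y \<in> H" "trans_prob Al Ar p \<pi> x y > 0"
    by (auto simp: support_rel_def mem_state_space_iff)
  then show ?thesis by (rule trans_prob_posE)
qed

lemma recurrent_class_eq_Times: "C = fst ` C \<times> Hp"
proof
  show "C \<subseteq> fst ` C \<times> Hp"
  proof
    fix y assume "y \<in> C"
    then have "snd y \<in> H" "p (snd y) > 0"
      using recurrent_class_subset recurrent_class_channel_pos by (auto simp: mem_state_space_iff)
    then show "y \<in> fst ` C \<times> Hp" using \<open>y \<in> C\<close> by (simp add: mem_Times_iff)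
  qed
next
  show "fst ` C \<times> Hp \<subseteq> C"
  proof
    fix z assume z: "z \<in> fst ` C \<times> Hp"
    then obtain y where y: "y \<in> C" and "fst z = fst y" by auto
    obtain x where x: "x \<in> C" "R x y" using recurrent_class_ex_pred[OF y] by blast
    then have "x \<in> SS" "snd y \<in> H" "trans_prob Al Ar p \<pi> x y > 0"
      by (auto simp: support_rel_def mem_state_space_iff)
    then obtain w where w: "\<pi> x w > 0" "aoi_next Al Ar (fst x) w = fst z"
      by (rule trans_prob_posE) (simp add: \<open>fst z = fst y\<close>)
    have "snd z \<in> H" "p (snd z) > 0" using z by auto
    then have "trans_prob Al Ar p \<pi> x z > 0"
      using trans_prob_pos_intro[OF \<open>x \<in> SS\<close> _ _ w] by blast
    moreover have "z \<in> SS"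
      using y z \<open>fst z = fst y\<close> recurrent_class_subset by (auto simp: mem_state_space_iff)
    ultimately have "R x z" using \<open>x \<in> SS\<close> by (simp add: support_rel_def)
    then show "z \<in> C" by (rule recurrent_class_closed[OF x(1)])
  qed
qed

lemma recurrent_class_rtrancl_aoi_step: "R\<^sup>*\<^sup>* x y \<Longrightarrow> x \<in> C \<Longrightarrow> U\<^sup>*\<^sup>* (fst x) (fst y)"
proof (induction rule: rtranclp_induct)
  case (step y z)
  then have "y \<in> C" using recurrent_class_closed_rtrancl by blast
  then have "U (fst y) (fst z)"
    using support_rel_imp_aoi_step[OF step.hyps(2)] recurrent_class_channel_pos by blast
  then show ?case using step by (meson rtranclp.rtrancl_into_rtrancl)
qed simp

lemma closed_communicating_fst_recurrent_class: "closed_communicating Al Ar U (fst ` C)"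
  unfolding closed_communicating_def
proof (intro conjI ballI allI impI)
  show "fst ` C \<noteq> {}" "fst ` C \<subseteq> aoi_states Al Ar"
    using recurrent_class_nonempty recurrent_class_subset by (auto simp: mem_state_space_iff)
  obtain h0 where h0: "h0 \<in> H" "p h0 > 0" using ex_channel_pos by blast
  have in_C: "(A, h) \<in> C" if "A \<in> fst ` C" "h \<in> H" "p h > 0" for A h
  proof -
    have "(A, h) \<in> fst ` C \<times> Hp" using that by blast
    then show ?thesis by (subst recurrent_class_eq_Times)
  qed
  show "B \<in> fst ` C" if "A \<in> fst ` C" "U A B" for A B
  proof -
    obtain h w where "A \<in> aoi_states Al Ar" "h \<in> H" "p h > 0" "\<pi> (A, h) w > 0" "aoi_next Al Ar A w = B"
      using \<open>U A B\<close> unfolding aoi_step_def by blast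
    moreover have "(A, h) \<in> C" using in_C[OF that(1)] calculation by blast
    ultimately have "(B, h0) \<in> C"
      using recurrent_class_closed support_rel_aoi_next[OF _ _ _ h0] by blast
    then show ?thesis by force
  qed
  show "U\<^sup>+\<^sup>+ A B" if "A \<in> fst ` C" "B \<in> fst ` C" for A B
  proof -
    have A: "(A, h0) \<in> C" and B: "(B, h0) \<in> C" using in_C that h0 by auto
    obtain w where w: "R (A, h0) (aoi_next Al Ar A w, h0)" (is "R _ ?z")
      using recurrent_class_ex_succ[OF A h0] by blast
    have z: "?z \<in> C" using recurrent_class_closed[OF A w] .
    have "U A (fst ?z)" using support_rel_imp_aoi_step[OF w] h0 by simp
    moreover have "U\<^sup>*\<^sup>* (fst ?z) B"
      using recurrent_class_rtrancl_aoi_step[OF recurrent_class_connected[OF z B] z] by simp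
    ultimately show ?thesis by (rule rtranclp_into_tranclp2)
  qed
qed

end

end

lemma unichain_if_aoi_step_eq:
  assumes c1: "induced_chain Al Ar H p1 \<pi>1" and c2: "induced_chain Al Ar H p2 \<pi>2"
    and same_step: "aoi_step Al Ar H p1 \<pi>1 = aoi_step Al Ar H p2 \<pi>2"
    and unichain2: "unichain Al Ar H p2 \<pi>2"
  shows "unichain Al Ar H p1 \<pi>1"
proof -
  interpret c1: induced_chain Al Ar H p1 \<pi>1 by (rule c1)
  interpret c2: induced_chain Al Ar H p2 \<pi>2 by (rule c2)
  obtain C2 where C2: "recurrent_class Al Ar H p2 \<pi>2 C2"
    and unique: "\<And>C. recurrent_class Al Ar H p2 \<pi>2 C \<Longrightarrow> C = C2"
    using unichain2 unfolding unichain_def by blast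
  let ?S = "fst ` C2"
  have S: "closed_communicating Al Ar (aoi_step Al Ar H p1 \<pi>1) ?S"
    using c2.closed_communicating_fst_recurrent_class[OF C2] same_step by simp
  have "C = ?S \<times> {h\<in>H. p1 h > 0}" if C: "recurrent_class Al Ar H p1 \<pi>1 C" for C
  proof -
    have "recurrent_class Al Ar H p2 \<pi>2 (fst ` C \<times> {h\<in>H. p2 h > 0})"
      using c2.recurrent_class_if_closed_communicating c1.closed_communicating_fst_recurrent_class[OF C]
        same_step by simp
    then have "fst ` C \<times> {h\<in>H. p2 h > 0} = C2" by (rule unique)
    then have "fst ` C \<times> {h\<in>H. p2 h > 0} = ?S \<times> {h\<in>H. p2 h > 0}"
      using c2.recurrent_class_eq_Times[OF C2] by (rule trans)
    moreover obtain h where "h \<in> {h\<in>H. p2 h > 0}" using c2.ex_channel_pos by blast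
    ultimately have "fst ` C = ?S" using Times_eq_cancel2 by blast
    from c1.recurrent_class_eq_Times[OF C] show ?thesis unfolding \<open>fst ` C = ?S\<close> .
  qed
  then show ?thesis
    using c1.recurrent_class_if_closed_communicating[OF S] unfolding unichain_def by blast
qed

section \<open>Transferring a policy between channels\<close>

lemma limsup_time_average_mono:
  fixes f g :: "nat \<Rightarrow> real"
  assumes "\<And>t. f t \<le> g t"
  shows "limsup (\<lambda>T. ereal (1 / real T * (\<Sum>t<T. f t))) \<le> limsup (\<lambda>T. ereal (1 / real T * (\<Sum>t<T. g t)))"
  by (intro Limsup_mono always_eventually allI)
     (simp add: divide_right_mono sum_mono assms)

lemma energy_cost_antimono:
  assumes "\<forall>h1\<in>H. \<forall>h2\<in>H. h1 \<le> h2 \<longrightarrow> Cu h2 \<le> Cu h1" "h \<in> H" "h' \<in> H" "h' \<le> h"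
  shows "energy_cost Cs Cu w h \<le> energy_cost Cs Cu w h'"
  using assms unfolding energy_cost_def by auto

text \<open>On channel states of probability zero the choice is irrelevant.\<close>
definition coupled_policy :: "real set \<Rightarrow> (real \<Rightarrow> real) \<Rightarrow> (real \<Rightarrow> real) \<Rightarrow> (aoi_state \<Rightarrow> action \<Rightarrow> real)
    \<Rightarrow> aoi_state \<Rightarrow> action \<Rightarrow> real" where
  "coupled_policy H pI pJ \<pi> x w =
     (if pI (snd x) > 0
      then (\<Sum>hJ\<in>H. quantile_coupling H pI pJ (snd x) hJ * \<pi> (fst x, hJ) w) / pI (snd x)
      else \<pi> x w)"

locale policy_transfer = pmf_pair H pI pJ for H pI pJ +
  fixes Al Ar :: nat and \<pi> :: "aoi_state \<Rightarrow> action \<Rightarrow> real"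
  assumes Al: "Al \<ge> 1" and Ar: "Ar \<ge> 1" and valid: "valid_policy Al Ar H \<pi>"
    and cdf_dominated: "\<And>t. cdf H pI t \<le> cdf H pJ t"
begin

abbreviation "\<pi>' \<equiv> coupled_policy H pI pJ \<pi>"
abbreviation "\<gamma> \<equiv> quantile_coupling H pI pJ"

lemma policy_nonneg: "A \<in> aoi_states Al Ar \<Longrightarrow> h \<in> H \<Longrightarrow> \<pi> (A, h) w \<ge> 0"
  and policy_sum: "A \<in> aoi_states Al Ar \<Longrightarrow> h \<in> H \<Longrightarrow> (\<Sum>w\<in>UNIV. \<pi> (A, h) w) = 1"
  using valid unfolding valid_policy_def state_space_eq by blast+

lemma coupled_policy_weighted:
  assumes hI: "hI \<in> H"
  shows "pI hI * \<pi>' (A, hI) w = (\<Sum>hJ\<in>H. \<gamma> hI hJ * \<pi> (A, hJ) w)"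
proof (cases "pI hI > 0")
  case False
  then have "pI hI = 0" using p_nonneg[OF hI] by simp
  then have "\<gamma> hI hJ = 0" if "hJ \<in> H" for hJ
    using quantile_coupling_le_fst[OF hI that] quantile_coupling_nonneg[of hI hJ] by simp
  then show ?thesis using \<open>pI hI = 0\<close> by simp
qed (simp add: coupled_policy_def)

lemma valid_coupled_policy: "valid_policy Al Ar H \<pi>'"
  unfolding valid_policy_def
proof (intro ballI conjI allI)
  fix x w assume "x \<in> state_space Al Ar H"
  then have A: "fst x \<in> aoi_states Al Ar" and h: "snd x \<in> H" by (auto simp: mem_state_space_iff)
  have "\<pi> (fst x, h) w \<ge> 0" if "h \<in> H" for h using policy_nonneg[OF A that] .
  moreover have "\<pi> x w \<ge> 0" using calculation[OF h] by simp
  ultimately show "\<pi>' x w \<ge> 0"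
    using quantile_coupling_nonneg
    by (auto simp: coupled_policy_def intro!: divide_nonneg_pos sum_nonneg mult_nonneg_nonneg)
  show "(\<Sum>w\<in>UNIV. \<pi>' x w) = 1"
  proof (cases "pI (snd x) > 0")
    case True
    have "(\<Sum>w\<in>UNIV. \<Sum>hJ\<in>H. \<gamma> (snd x) hJ * \<pi> (fst x, hJ) w)
        = (\<Sum>hJ\<in>H. \<gamma> (snd x) hJ * (\<Sum>w\<in>UNIV. \<pi> (fst x, hJ) w))"
      by (subst sum.swap) (simp add: sum_distrib_left)
    also have "\<dots> = pI (snd x)"
      using policy_sum[OF A] quantile_coupling_sum_snd[OF h] by simp
    finally show ?thesis
      using True by (simp add: coupled_policy_def sum_divide_distrib[symmetric])
  next
    case False
    then show ?thesis using policy_sum[OF A h] by (simp add: coupled_policy_def)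
  qed
qed

lemma aoi_action_prob_coupled_policy:
  "A \<in> aoi_states Al Ar \<Longrightarrow> aoi_action_prob H pI \<pi>' A w = aoi_action_prob H pJ \<pi> A w"
proof -
  have "aoi_action_prob H pI \<pi>' A w = (\<Sum>hI\<in>H. \<Sum>hJ\<in>H. \<gamma> hI hJ * \<pi> (A, hJ) w)"
    unfolding aoi_action_prob_def by (rule sum.cong[OF refl]) (rule coupled_policy_weighted)
  also have "\<dots> = (\<Sum>hJ\<in>H. (\<Sum>hI\<in>H. \<gamma> hI hJ) * \<pi> (A, hJ) w)"
    by (subst sum.swap) (simp add: sum_distrib_right)
  also have "\<dots> = aoi_action_prob H pJ \<pi> A w"
    unfolding aoi_action_prob_def by (rule sum.cong[OF refl]) (simp add: quantile_coupling_sum_fst)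
  finally show ?thesis .
qed

lemma aoi_action_prob_nonneg: "A \<in> aoi_states Al Ar \<Longrightarrow> aoi_action_prob H pJ \<pi> A w \<ge> 0"
  unfolding aoi_action_prob_def using q_nonneg policy_nonneg by (intro sum_nonneg mult_nonneg_nonneg)

lemma aoi_dist_coupled_policy:
  "aoi_dist Al Ar (aoi_action_prob H pI \<pi>') t = aoi_dist Al Ar (aoi_action_prob H pJ \<pi>) t"
  by (rule aoi_dist_cong) (rule aoi_action_prob_coupled_policy)

lemma avg_AoI_coupled_policy: "avg_AoI Al Ar H pI \<pi>' = avg_AoI Al Ar H pJ \<pi>"
  unfolding avg_AoI_eq_aoi_dist[OF finite_H sum_p] avg_AoI_eq_aoi_dist[OF finite_H sum_q]
    aoi_dist_coupled_policy ..

context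
  fixes Cs :: real and Cu :: "real \<Rightarrow> real"
  assumes Cu_antimono: "\<forall>h1\<in>H. \<forall>h2\<in>H. h1 \<le> h2 \<longrightarrow> Cu h2 \<le> Cu h1"
begin

definition action_cost :: "nat \<times> nat \<Rightarrow> real \<Rightarrow> real \<Rightarrow> real" where
  "action_cost A hJ h = (\<Sum>w\<in>UNIV. \<pi> (A, hJ) w * energy_cost Cs Cu w h)"

lemma coupled_policy_action_cost: "hI \<in> H \<Longrightarrow>
  pI hI * (\<Sum>w\<in>UNIV. \<pi>' (A, hI) w * energy_cost Cs Cu w hI) = (\<Sum>hJ\<in>H. \<gamma> hI hJ * action_cost A hJ hI)"
proof -
  assume hI: "hI \<in> H"
  have "pI hI * (\<Sum>w\<in>UNIV. \<pi>' (A, hI) w * energy_cost Cs Cu w hI)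
      = (\<Sum>w\<in>UNIV. (\<Sum>hJ\<in>H. \<gamma> hI hJ * \<pi> (A, hJ) w) * energy_cost Cs Cu w hI)"
    by (simp add: sum_distrib_left coupled_policy_weighted[OF hI, symmetric] mult.assoc)
  also have "\<dots> = (\<Sum>hJ\<in>H. \<gamma> hI hJ * action_cost A hJ hI)"
    unfolding action_cost_def
    by (simp add: sum_distrib_left sum_distrib_right mult.assoc) (rule sum.swap)
  finally show ?thesis .
qed

text \<open>The coupling only moves mass to channel states at least as good, where sending is cheaper.\<close>
lemma coupling_action_cost_le:
  assumes "A \<in> aoi_states Al Ar" "hI \<in> H" "hJ \<in> H"
  shows "\<gamma> hI hJ * action_cost A hJ hI \<le> \<gamma> hI hJ * action_cost A hJ hJ"
proof (cases "\<gamma> hI hJ > 0")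
  case True
  then have "hJ \<le> hI" using quantile_coupling_pos_imp_le[OF cdf_dominated] by blast
  then have "action_cost A hJ hI \<le> action_cost A hJ hJ"
    unfolding action_cost_def using assms policy_nonneg energy_cost_antimono[OF Cu_antimono]
    by (intro sum_mono mult_left_mono) auto
  then show ?thesis using True by simp
qed (use quantile_coupling_nonneg[of hI hJ] in simp)

lemma aoi_expected_cost_coupled_policy_le:
  assumes A: "A \<in> aoi_states Al Ar"
  shows "aoi_expected_cost H pI Cs Cu \<pi>' A \<le> aoi_expected_cost H pJ Cs Cu \<pi> A"
proof -
  have "aoi_expected_cost H pI Cs Cu \<pi>' A = (\<Sum>hI\<in>H. \<Sum>hJ\<in>H. \<gamma> hI hJ * action_cost A hJ hI)"
    unfolding aoi_expected_cost_def by (intro sum.cong refl) (rule coupled_policy_action_cost)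
  also have "\<dots> \<le> (\<Sum>hI\<in>H. \<Sum>hJ\<in>H. \<gamma> hI hJ * action_cost A hJ hJ)"
    using coupling_action_cost_le[OF A] by (intro sum_mono) auto
  also have "\<dots> = (\<Sum>hJ\<in>H. (\<Sum>hI\<in>H. \<gamma> hI hJ) * action_cost A hJ hJ)"
    by (subst sum.swap) (simp add: sum_distrib_right)
  also have "\<dots> = aoi_expected_cost H pJ Cs Cu \<pi> A"
    unfolding aoi_expected_cost_def action_cost_def
    by (intro sum.cong refl) (simp add: quantile_coupling_sum_fst)
  finally show ?thesis .
qed

lemma avg_cost_coupled_policy_le: "avg_cost Al Ar H pI Cs Cu \<pi>' \<le> avg_cost Al Ar H pJ Cs Cu \<pi>"
  unfolding avg_cost_eq_aoi_dist[OF finite_H] aoi_dist_coupled_policy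
  using aoi_dist_nonneg[OF aoi_action_prob_nonneg] aoi_expected_cost_coupled_policy_le
  by (intro limsup_time_average_mono sum_mono mult_left_mono) auto

end

lemma aoi_step_coupled_policy_imp: "aoi_step Al Ar H pI \<pi>' A B \<Longrightarrow> aoi_step Al Ar H pJ \<pi> A B"
proof -
  assume "aoi_step Al Ar H pI \<pi>' A B"
  then obtain hI w where A: "A \<in> aoi_states Al Ar" and hI: "hI \<in> H" "pI hI > 0"
    and w: "\<pi>' (A, hI) w > 0" "aoi_next Al Ar A w = B"
    unfolding aoi_step_def by blast
  have pos: "(\<Sum>hJ\<in>H. \<gamma> hI hJ * \<pi> (A, hJ) w) > 0"
    using coupled_policy_weighted[OF hI(1), of A w] mult_pos_pos[OF hI(2) w(1)] by simp
  have nonneg: "\<gamma> hI h * \<pi> (A, h) w \<ge> 0" if "h \<in> H" for h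
    using quantile_coupling_nonneg policy_nonneg[OF A that] by simp
  obtain hJ where hJ: "hJ \<in> H" "\<gamma> hI hJ * \<pi> (A, hJ) w > 0"
    using sum_pos_imp_ex_pos[OF finite_H nonneg pos] by blast
  then have "\<gamma> hI hJ > 0" "\<pi> (A, hJ) w > 0"
    using quantile_coupling_nonneg[of hI hJ] policy_nonneg[OF A hJ(1), of w]
    by (auto simp: zero_less_mult_iff)
  moreover have "pJ hJ > 0" using calculation quantile_coupling_le_snd[OF hI(1) hJ(1)] by linarith
  ultimately show ?thesis unfolding aoi_step_def using A hJ(1) w(2) by blast
qed

lemma aoi_step_imp_coupled_policy: "aoi_step Al Ar H pJ \<pi> A B \<Longrightarrow> aoi_step Al Ar H pI \<pi>' A B"
proof -
  assume "aoi_step Al Ar H pJ \<pi> A B"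
  then obtain hJ w where A: "A \<in> aoi_states Al Ar" and hJ: "hJ \<in> H" "pJ hJ > 0"
    and w: "\<pi> (A, hJ) w > 0" "aoi_next Al Ar A w = B"
    unfolding aoi_step_def by blast
  have pos: "(\<Sum>hI\<in>H. \<gamma> hI hJ) > 0" using quantile_coupling_sum_fst[OF hJ(1)] hJ(2) by simp
  obtain hI where hI: "hI \<in> H" "\<gamma> hI hJ > 0"
    using sum_pos_imp_ex_pos[OF finite_H quantile_coupling_nonneg pos] by blast
  have "pI hI > 0" using hI quantile_coupling_le_fst[OF hI(1) hJ(1)] by linarith
  have "0 < \<gamma> hI hJ * \<pi> (A, hJ) w" using hI w by simp
  also have "\<dots> \<le> (\<Sum>h\<in>H. \<gamma> hI h * \<pi> (A, h) w)"
    using quantile_coupling_nonneg policy_nonneg[OF A]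
    by (intro member_le_sum[OF hJ(1) _ finite_H]) simp
  also have "\<dots> = pI hI * \<pi>' (A, hI) w" by (rule coupled_policy_weighted[OF hI(1), symmetric])
  finally have "\<pi>' (A, hI) w > 0" using \<open>pI hI > 0\<close> by (simp add: zero_less_mult_iff)
  then show ?thesis unfolding aoi_step_def using A hI(1) \<open>pI hI > 0\<close> w(2) by blast
qed

lemma unichain_coupled_policy: "unichain Al Ar H pJ \<pi> \<Longrightarrow> unichain Al Ar H pI \<pi>'"
proof (rule unichain_if_aoi_step_eq)
  show "induced_chain Al Ar H pI \<pi>'" "induced_chain Al Ar H pJ \<pi>"
    using Al Ar finite_H pmf_p pmf_q valid valid_coupled_policy by unfold_locales
  show "aoi_step Al Ar H pI \<pi>' = aoi_step Al Ar H pJ \<pi>"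
    using aoi_step_coupled_policy_imp aoi_step_imp_coupled_policy by blast
qed

end

theorem theorem2:
  fixes Al Ar :: nat and H :: "real set" and pI pJ :: "real \<Rightarrow> real"
    and Cs Cmax :: real and Cu :: "real \<Rightarrow> real"
  assumes "Al \<ge> 1" and "Ar \<ge> 1"
    and "finite H" and "H \<noteq> {}" and "H \<subseteq> {0<..}"
    and "is_pmf_on H pI" and "is_pmf_on H pJ"
    and "Cs \<ge> 0" and "\<forall>h\<in>H. Cu h \<ge> 0"
    and "Cmax > 0"
    and "feasible_policies Al Ar H pI Cs Cu Cmax \<noteq> {}"
    and "feasible_policies Al Ar H pJ Cs Cu Cmax \<noteq> {}"
    and Cu_nonincr: "\<forall>h1\<in>H. \<forall>h2\<in>H. h1 \<le> h2 \<longrightarrow> Cu h2 \<le> Cu h1"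
    and fosd: "\<forall>f :: real \<Rightarrow> real. mono_on H f \<longrightarrow>
                 (\<Sum>h\<in>H. f h * pI h) \<ge> (\<Sum>h\<in>H. f h * pJ h)"
  shows "opt_AoI Al Ar H pI Cs Cu Cmax \<le> opt_AoI Al Ar H pJ Cs Cu Cmax"
proof -
  have cdf_le: "cdf H pI t \<le> cdf H pJ t" for t
    using fosd_imp_cdf_le[OF assms(3,6,7) fosd] .
  have "opt_AoI Al Ar H pI Cs Cu Cmax \<le> avg_AoI Al Ar H pJ \<pi>"
    if feasible: "\<pi> \<in> feasible_policies Al Ar H pJ Cs Cu Cmax" for \<pi>
  proof -
    interpret policy_transfer H pI pJ Al Ar \<pi>
      using assms cdf_le feasible by unfold_locales (auto simp: feasible_policies_def)
    have "coupled_policy H pI pJ \<pi> \<in> feasible_policies Al Ar H pI Cs Cu Cmax"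
      using feasible valid_coupled_policy unichain_coupled_policy avg_cost_coupled_policy_le[OF Cu_nonincr]
      by (auto simp: feasible_policies_def intro: order_trans)
    then show ?thesis
      unfolding opt_AoI_def avg_AoI_coupled_policy[symmetric] by (rule INF_lower)
  qed
  then show ?thesis unfolding opt_AoI_def[of Al Ar H pJ] by (rule INF_greatest)
qed

end
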